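(* For $n\ge3$ define the graphon $W_n$ on $[0,1]^2$ by $W_n(x,y)=1$ if ($x\le\frac12-\frac1n$ and $y\ge\frac12+\frac1n$), or ($x\ge\frac12+\frac1n$ and $y\le\frac12-\frac1n$), or ($x,y\in[\frac12-e^{-n}-\frac1n,\ \frac12+e^{-n}+\frac1n]$), and $W_n(x,y)=0$ otherwise. Let $W(x,y)=1$ if exactly one of $x,y$ lies in $[0,\frac12]$ and $W(x,y)=0$ otherwise. Then each $W_n$ is connected, $\|W_n-W\|_{L^1([0,1]^2)}\to0$, $h_{W_n}\to0$, but $h_W=\frac12$. In particular $h_{W_n}\not\to h_W$.
   Context: A graphon is a measurable symmetric $W:[0,1]^2\to[0,1]$. For measurable $A,B\subseteq[0,1]$, $e_W(A,B)=\int_{A\times B}W$, $\mathrm{vol}_W(A)=e_W(A,[0,1])$. $W$ is connected if $e_W(A,A^c)\ne0$ for every measurable $A$ with $0<\mu_L(A)<1$ ($\mu_L$ Lebesgue measure). The Cheeger constant is $h_W=\inf_{A:\,0<\mu_L(A)<1}\frac{e_W(A,A^c)}{\min\{\mathrm{vol}_W(A),\mathrm{vol}_W(A^c)\}}$. *)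

theory Defs
  imports "HOL-Analysis.Analysis"
begin

definition unit_sets :: "real set set" where
  "unit_sets = {A. A \<in> sets lebesgue \<and> A \<subseteq> {0..1}}"

definition is_graphon :: "(real \<Rightarrow> real \<Rightarrow> real) \<Rightarrow> bool" where
  "is_graphon W \<longleftrightarrow>
     (\<lambda>z. W (fst z) (snd z)) \<in> borel_measurable (lebesgue \<Otimes>\<^sub>M lebesgue) \<and>
     (\<forall>x\<in>{0..1}. \<forall>y\<in>{0..1}. W x y = W y x \<and> 0 \<le> W x y \<and> W x y \<le> 1)"

definition e_W :: "(real \<Rightarrow> real \<Rightarrow> real) \<Rightarrow> real set \<Rightarrow> real set \<Rightarrow> real" where
  "e_W W A B = (LINT z:A \<times> B|(lebesgue \<Otimes>\<^sub>M lebesgue). W (fst z) (snd z))"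

definition vol_W :: "(real \<Rightarrow> real \<Rightarrow> real) \<Rightarrow> real set \<Rightarrow> real" where
  "vol_W W A = e_W W A {0..1}"

definition graphon_connected :: "(real \<Rightarrow> real \<Rightarrow> real) \<Rightarrow> bool" where
  "graphon_connected W \<longleftrightarrow>
     (\<forall>A\<in>unit_sets. 0 < measure lebesgue A \<and> measure lebesgue A < 1 \<longrightarrow>
        e_W W A ({0..1} - A) \<noteq> 0)"

definition cheeger :: "(real \<Rightarrow> real \<Rightarrow> real) \<Rightarrow> real" where
  "cheeger W = (INF A \<in> {A\<in>unit_sets. 0 < measure lebesgue A \<and> measure lebesgue A < 1}.
      e_W W A ({0..1} - A) / min (vol_W W A) (vol_W W ({0..1} - A)))"

definition L1_dist :: "(real \<Rightarrow> real \<Rightarrow> real) \<Rightarrow> (real \<Rightarrow> real \<Rightarrow> real) \<Rightarrow> real" where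
  "L1_dist U V = (LINT z:{0..1} \<times> {0..1}|(lebesgue \<Otimes>\<^sub>M lebesgue). \<bar>U (fst z) (snd z) - V (fst z) (snd z)\<bar>)"

definition Wn :: "nat \<Rightarrow> real \<Rightarrow> real \<Rightarrow> real" where
  "Wn n x y =
     (if (x \<le> 1/2 - 1/real n \<and> y \<ge> 1/2 + 1/real n)
       \<or> (x \<ge> 1/2 + 1/real n \<and> y \<le> 1/2 - 1/real n)
       \<or> (x \<in> {1/2 - exp (- real n) - 1/real n .. 1/2 + exp (- real n) + 1/real n} \<and>
          y \<in> {1/2 - exp (- real n) - 1/real n .. 1/2 + exp (- real n) + 1/real n})
      then 1 else 0)"

definition Wlim :: "real \<Rightarrow> real \<Rightarrow> real" where
  "Wlim x y = (if (x \<in> {0..1/2}) \<noteq> (y \<in> {0..1/2}) then 1 else 0)"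

end

theory Submission
  imports Defs "HOL-Real_Asymp.Real_Asymp"
begin

text \<open>W_n is the complete bipartite graphon between L = [0, 1/2 - 1/n] and R = [1/2 + 1/n, 1]
  plus a clique on the bridge C = [1/2 - e^-n - 1/n, 1/2 + e^-n + 1/n], which overlaps each of L
  and R in an interval of length e^-n. A cut without crossing edges would have to keep both
  overlaps, and with them L, R and C, on one side, so W_n is connected. Cutting off C, however,
  only severs the edges leaving the two overlaps, of measure at most 2 e^-n, while both sides
  have volume of order at least 1/n^2, so h(W_n) = O(n^2 e^-n). Since W_n agrees with W off
  C \<times> [0,1] \<union> [0,1] \<times> C, it converges to W in L^1. For W itself, a set with masses a and b in
  the two halves and s = a + b has cut s/2 - 2ab \<ge> s(1 - s)/2 and smaller volume min(s, 1 - s)/2,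
  so its cut ratio is at least max(s, 1 - s) \<ge> 1/2, with equality for [0, 1/4] \<union> [3/4, 1].\<close>

section \<open>Lebesgue measure on the unit square\<close>

abbreviation lebesgue2 :: "(real \<times> real) measure" where
  "lebesgue2 \<equiv> lebesgue \<Otimes>\<^sub>M lebesgue"

lemma measurable_fst_lebesgue2 [measurable]: "fst \<in> borel_measurable lebesgue2"
  by (rule measurable_compose[OF measurable_fst measurable_completion]) simp

lemma measurable_snd_lebesgue2 [measurable]: "snd \<in> borel_measurable lebesgue2"
  by (rule measurable_compose[OF measurable_snd measurable_completion]) simp

lemma sigma_finite_lebesgue: "sigma_finite_measure (lebesgue :: real measure)"
proof
  obtain \<A> :: "real set set" where \<A>: "countable \<A>" "\<A> \<subseteq> sets lborel" "\<Union>\<A> = space lborel"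
    "\<forall>a\<in>\<A>. emeasure lborel a \<noteq> \<infinity>"
    using lborel.sigma_finite_countable by blast
  moreover have "emeasure lebesgue a = emeasure lborel a" if "a \<in> \<A>" for a
    using \<A>(2) that by auto
  ultimately show "\<exists>\<A>. countable \<A> \<and> \<A> \<subseteq> sets (lebesgue :: real measure) \<and> \<Union>\<A> = space lebesgue
      \<and> (\<forall>a\<in>\<A>. emeasure lebesgue a \<noteq> \<infinity>)"
    by (intro exI[of _ \<A>]) auto
qed

lemma emeasure_lebesgue_unit_ne_infinity:
  assumes "S \<subseteq> {0..1::real}"
  shows "emeasure lebesgue S \<noteq> \<infinity>"
proof -
  have "emeasure lebesgue S \<le> emeasure lebesgue {0..1::real}"
    by (rule emeasure_mono[OF assms]) simp
  then show ?thesis by (auto simp: top_unique)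
qed

lemma fmeasurable_lebesgue_unit:
  assumes "S \<in> sets lebesgue" "S \<subseteq> {0..1::real}"
  shows "S \<in> fmeasurable lebesgue"
  by (rule fmeasurableI2[OF _ assms(2,1)]) simp

lemma measure_lebesgue2_Times:
  assumes "S \<in> fmeasurable lebesgue" "S' \<in> fmeasurable lebesgue"
  shows "measure lebesgue2 (S \<times> S') = measure lebesgue S * measure lebesgue S'"
  using assms sigma_finite_measure.emeasure_pair_measure_Times[OF sigma_finite_lebesgue, of S lebesgue S']
  by (simp add: measure_def fmeasurable_def enn2real_mult)

lemma fmeasurable_lebesgue2_unit:
  assumes "X \<in> sets lebesgue2" "X \<subseteq> {0..1} \<times> {0..1}"
  shows "X \<in> fmeasurable lebesgue2"
proof (rule fmeasurableI2[OF _ assms(2,1)])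
  show "{0..1::real} \<times> {0..1} \<in> fmeasurable lebesgue2"
    by (simp add: fmeasurable_def sigma_finite_measure.emeasure_pair_measure_Times[OF sigma_finite_lebesgue])
qed

lemma measure_unit_mono:
  assumes "X \<subseteq> Y" "X \<in> sets lebesgue" "Y \<in> sets lebesgue" "Y \<subseteq> {0..1::real}"
  shows "measure lebesgue X \<le> measure lebesgue Y"
  by (rule measure_mono_fmeasurable[OF assms(1,2) fmeasurable_lebesgue_unit[OF assms(3,4)]])

lemma measure_le_cover:
  assumes "X \<subseteq> P \<union> Q" "X \<in> sets M" "P \<in> sets M" "Q \<in> sets M"
  shows "measure M X \<le> measure M (X \<inter> P) + measure M (X \<inter> Q)"
proof -
  have "X = (X \<inter> P) \<union> (X \<inter> Q)" using assms(1) by blast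
  then show ?thesis using assms(2-4) by (metis measure_Un_le sets.Int)
qed

lemma measure_le_cover3:
  assumes "X \<subseteq> P \<union> Q \<union> R" "X \<in> sets M" "P \<in> sets M" "Q \<in> sets M" "R \<in> sets M"
  shows "measure M X \<le> measure M (X \<inter> P) + measure M (X \<inter> Q) + measure M (X \<inter> R)"
proof -
  have "measure M X \<le> measure M (X \<inter> (P \<union> Q)) + measure M (X \<inter> R)"
    using assms by (intro measure_le_cover) auto
  moreover have "measure M (X \<inter> (P \<union> Q)) \<le> measure M (X \<inter> P) + measure M (X \<inter> Q)"
    using assms measure_le_cover[of "X \<inter> (P \<union> Q)" P Q M] by (auto simp: Int_assoc)
  ultimately show ?thesis by linarith
qed

lemma set_integral_zero_one:
  assumes "\<And>z. G z = 0 \<or> G z = 1" "X \<subseteq> space M"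
  shows "(LINT z:X|M. G z) = measure M (X \<inter> {z. G z = 1})"
proof -
  have "(\<lambda>z. indicator X z *\<^sub>R G z) = indicator (X \<inter> {z. G z = 1})"
    using assms by (auto simp: indicator_def fun_eq_iff)
  moreover have "X \<inter> {z. G z = 1} \<inter> space M = X \<inter> {z. G z = 1}" using assms(2) by blast
  ultimately show ?thesis unfolding set_lebesgue_integral_def by simp
qed

section \<open>Cut ratios and the Cheeger constant\<close>

lemma e_W_nonneg:
  assumes "is_graphon W" "A \<subseteq> {0..1}" "B \<subseteq> {0..1}"
  shows "0 \<le> e_W W A B"
  using assms unfolding e_W_def set_lebesgue_integral_def is_graphon_def
  by (intro Bochner_Integration.integral_nonneg) (auto simp: indicator_def subset_eq)

definition cut_ratio :: "(real \<Rightarrow> real \<Rightarrow> real) \<Rightarrow> real set \<Rightarrow> real" where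
  "cut_ratio W A = e_W W A ({0..1} - A) / min (vol_W W A) (vol_W W ({0..1} - A))"

definition proper_unit_sets :: "real set set" where
  "proper_unit_sets = {A \<in> unit_sets. 0 < measure lebesgue A \<and> measure lebesgue A < 1}"

lemma cheeger_eq_INF: "cheeger W = (INF A \<in> proper_unit_sets. cut_ratio W A)"
  unfolding cheeger_def proper_unit_sets_def cut_ratio_def ..

lemma cut_ratio_nonneg:
  assumes "is_graphon W" "A \<in> unit_sets"
  shows "0 \<le> cut_ratio W A"
  using assms e_W_nonneg[OF assms(1)] unfolding cut_ratio_def vol_W_def unit_sets_def
  by (auto intro!: divide_nonneg_nonneg)

lemma cheeger_le_cut_ratio:
  assumes "is_graphon W" "A \<in> proper_unit_sets"
  shows "cheeger W \<le> cut_ratio W A"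
  unfolding cheeger_eq_INF using assms
  by (intro cINF_lower bdd_belowI2[where m=0] cut_ratio_nonneg) (auto simp: proper_unit_sets_def)

lemma cheeger_nonneg:
  assumes "is_graphon W"
  shows "0 \<le> cheeger W"
proof -
  have "{0..1/2} \<in> proper_unit_sets"
    by (simp add: proper_unit_sets_def unit_sets_def)
  then have "proper_unit_sets \<noteq> {}" by blast
  then show ?thesis unfolding cheeger_eq_INF
    by (rule cINF_greatest) (auto intro: cut_ratio_nonneg[OF assms] simp: proper_unit_sets_def)
qed

section \<open>Graphons with values in \<open>{0, 1}\<close>\<close>

locale zero_one_graphon =
  fixes W :: "real \<Rightarrow> real \<Rightarrow> real"
  assumes zero_one: "W x y = 0 \<or> W x y = 1"
    and measurable: "(\<lambda>z. W (fst z) (snd z)) \<in> borel_measurable lebesgue2"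
begin

definition edges :: "(real \<times> real) set" where
  "edges = {z. W (fst z) (snd z) = 1}"

lemma sets_edges: "edges \<in> sets lebesgue2"
  using measurable_sets[OF measurable, of "{1}"]
  by (simp add: edges_def space_pair_measure vimage_def)

lemma e_W_eq_measure: "e_W W A B = measure lebesgue2 (A \<times> B \<inter> edges)"
  unfolding e_W_def edges_def by (rule set_integral_zero_one) (auto simp: zero_one space_pair_measure)

lemma e_W_le_measure:
  assumes "A \<times> B \<inter> edges \<subseteq> U" "U \<in> fmeasurable lebesgue2" "A \<in> sets lebesgue" "B \<in> sets lebesgue"
  shows "e_W W A B \<le> measure lebesgue2 U"
  unfolding e_W_eq_measure using assms sets_edges by (intro measure_mono_fmeasurable) auto

lemma e_W_ge_Times:
  assumes "A \<in> unit_sets" "B \<in> unit_sets" "S \<subseteq> A" "S' \<subseteq> B" "S \<in> sets lebesgue" "S' \<in> sets lebesgue"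
    and "\<And>x y. x \<in> S \<Longrightarrow> y \<in> S' \<Longrightarrow> W x y = 1"
  shows "measure lebesgue S * measure lebesgue S' \<le> e_W W A B"
proof -
  have unit: "A \<subseteq> {0..1}" "B \<subseteq> {0..1}" "A \<in> sets lebesgue" "B \<in> sets lebesgue"
    using assms(1,2) by (auto simp: unit_sets_def)
  have "measure lebesgue S * measure lebesgue S' = measure lebesgue2 (S \<times> S')"
    using assms(3-6) unit by (intro measure_lebesgue2_Times[symmetric] fmeasurable_lebesgue_unit) auto
  also have "\<dots> \<le> measure lebesgue2 (A \<times> B \<inter> edges)"
    using assms(3-7) unit sets_edges
    by (intro measure_mono_fmeasurable fmeasurable_lebesgue2_unit) (auto simp: edges_def)
  finally show ?thesis unfolding e_W_eq_measure .
qed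

lemma e_W_eq_0_imp_null:
  assumes "e_W W A B = 0" "A \<in> unit_sets" "B \<in> unit_sets" "P \<in> sets lebesgue" "Q \<in> sets lebesgue"
    and "\<And>x y. x \<in> P \<Longrightarrow> y \<in> Q \<Longrightarrow> W x y = 1"
  shows "measure lebesgue (A \<inter> P) = 0 \<or> measure lebesgue (B \<inter> Q) = 0"
proof -
  have "measure lebesgue (A \<inter> P) * measure lebesgue (B \<inter> Q) \<le> 0"
    using e_W_ge_Times[of A B "A \<inter> P" "B \<inter> Q"] assms by (auto simp: unit_sets_def)
  then show ?thesis
    by (metis measure_nonneg mult_le_0_iff order_antisym)
qed

text \<open>A cut without crossing edges cannot split a block of positive measure on which \<open>W = 1\<close>;
  as \<open>C\<close> overlaps both \<open>L\<close> and \<open>R\<close>, the side carrying mass of \<open>C\<close> carries mass of \<open>L\<close> and \<open>R\<close>,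
  and then the other side is null.\<close>
lemma graphon_connected_if_bridged:
  assumes sets: "L \<in> sets lebesgue" "C \<in> sets lebesgue" "R \<in> sets lebesgue"
    and cover: "{0..1} \<subseteq> L \<union> C \<union> R" and "C \<subseteq> {0..1}"
    and LR: "\<And>x y. x \<in> L \<Longrightarrow> y \<in> R \<Longrightarrow> W x y = 1"
    and RL: "\<And>x y. x \<in> R \<Longrightarrow> y \<in> L \<Longrightarrow> W x y = 1"
    and CC: "\<And>x y. x \<in> C \<Longrightarrow> y \<in> C \<Longrightarrow> W x y = 1"
    and overlap: "0 < measure lebesgue (L \<inter> C)" "0 < measure lebesgue (R \<inter> C)"
  shows "graphon_connected W"
  unfolding graphon_connected_def
proof (intro ballI impI notI)
  fix A assume A: "A \<in> unit_sets" and mA: "0 < measure lebesgue A \<and> measure lebesgue A < 1"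
    and cut: "e_W W A ({0..1} - A) = 0"
  define B where "B = {0..1} - A"
  let ?m = "measure (lebesgue :: real measure)"
  have A_unit: "A \<subseteq> {0..1}" "A \<in> sets lebesgue" using A by (auto simp: unit_sets_def)
  have B_unit: "B \<in> unit_sets" "B \<subseteq> {0..1}" "B \<in> sets lebesgue"
    using A_unit by (auto simp: unit_sets_def B_def)
  have mB: "?m B = 1 - ?m A"
    using A_unit unfolding B_def by (subst measure_Diff) auto
  have null: "?m (A \<inter> C) = 0 \<or> ?m (B \<inter> C) = 0" "?m (A \<inter> L) = 0 \<or> ?m (B \<inter> R) = 0"
    "?m (A \<inter> R) = 0 \<or> ?m (B \<inter> L) = 0"
    using e_W_eq_0_imp_null[OF cut[folded B_def] A B_unit(1)] sets LR RL CC by blast+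
  have split: "?m X \<le> ?m (X \<inter> L) + ?m (X \<inter> C) + ?m (X \<inter> R)"
    if "X \<subseteq> {0..1}" "X \<in> sets lebesgue" for X
    using that cover sets by (intro measure_le_cover3) auto
  have overlap_split: "?m (S \<inter> C) \<le> ?m (A \<inter> (S \<inter> C)) + ?m (B \<inter> (S \<inter> C))"
    if "S \<in> sets lebesgue" for S
    using measure_le_cover[of "S \<inter> C" A B lebesgue] that sets A_unit B_unit \<open>C \<subseteq> {0..1}\<close>
    by (auto simp: B_def Int_ac)
  have mono: "?m (X \<inter> (S \<inter> C)) \<le> ?m (X \<inter> S)" "?m (X \<inter> (S \<inter> C)) \<le> ?m (X \<inter> C)"
    if "X \<subseteq> {0..1}" "X \<in> sets lebesgue" "S \<in> sets lebesgue" for X S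
    using that sets by (auto intro!: measure_unit_mono)
  show False
    using null split[OF A_unit] split[OF B_unit(2,3)] overlap_split[OF sets(1)] overlap_split[OF sets(3)]
      mono[OF A_unit sets(1)] mono[OF A_unit sets(3)] mono[OF B_unit(2,3) sets(1)] mono[OF B_unit(2,3) sets(3)]
      mA mB overlap
      measure_nonneg[of lebesgue "A \<inter> (L \<inter> C)"] measure_nonneg[of lebesgue "B \<inter> (L \<inter> C)"]
      measure_nonneg[of lebesgue "A \<inter> (R \<inter> C)"] measure_nonneg[of lebesgue "B \<inter> (R \<inter> C)"]
      measure_nonneg[of lebesgue "A \<inter> L"] measure_nonneg[of lebesgue "A \<inter> R"]
      measure_nonneg[of lebesgue "B \<inter> L"] measure_nonneg[of lebesgue "B \<inter> R"]
    by linarith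
qed

end

lemma L1_dist_nonneg: "0 \<le> L1_dist U V"
  unfolding L1_dist_def set_lebesgue_integral_def
  by (intro Bochner_Integration.integral_nonneg) (simp add: indicator_def)

lemma L1_dist_le_if_agree_outside:
  assumes "zero_one_graphon U" "zero_one_graphon V" "C \<in> sets lebesgue" "C \<subseteq> {0..1}"
    and agree: "\<And>x y. x \<in> {0..1} - C \<Longrightarrow> y \<in> {0..1} - C \<Longrightarrow> U x y = V x y"
  shows "L1_dist U V \<le> 2 * measure lebesgue C"
proof -
  let ?G = "\<lambda>z. \<bar>U (fst z) (snd z) - V (fst z) (snd z)\<bar>"
  let ?D = "{0..1} \<times> {0..1} \<inter> {z. ?G z = 1}"
  have G01: "?G z = 0 \<or> ?G z = 1" for z
    using zero_one_graphon.zero_one[OF assms(1), of "fst z" "snd z"]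
      zero_one_graphon.zero_one[OF assms(2), of "fst z" "snd z"] by auto
  have "?G \<in> borel_measurable lebesgue2"
    using zero_one_graphon.measurable[OF assms(1)] zero_one_graphon.measurable[OF assms(2)] by measurable
  then have "{z. ?G z = 1} \<in> sets lebesgue2"
    using measurable_sets[of ?G lebesgue2 borel "{1}"] by (simp add: space_pair_measure vimage_def)
  then have D: "?D \<in> sets lebesgue2"
    by (intro sets.Int pair_measureI) auto
  have "L1_dist U V = measure lebesgue2 ?D"
    unfolding L1_dist_def using G01 by (intro set_integral_zero_one) (auto simp: space_pair_measure)
  also have "\<dots> \<le> measure lebesgue2 (C \<times> {0..1} \<union> {0..1} \<times> C)"
  proof (rule measure_mono_fmeasurable)
    show "?D \<subseteq> C \<times> {0..1} \<union> {0..1} \<times> C"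
    proof
      fix z assume z: "z \<in> ?D"
      show "z \<in> C \<times> {0..1} \<union> {0..1} \<times> C"
      proof (rule ccontr)
        assume "z \<notin> C \<times> {0..1} \<union> {0..1} \<times> C"
        then have "U (fst z) (snd z) = V (fst z) (snd z)" using z agree by (auto simp: mem_Times_iff)
        then show False using z by simp
      qed
    qed
  qed (use D assms(3,4) in \<open>auto intro!: fmeasurable_lebesgue2_unit\<close>)
  also have "\<dots> \<le> measure lebesgue2 (C \<times> {0..1}) + measure lebesgue2 ({0..1} \<times> C)"
    using assms(3) by (intro measure_Un_le) auto
  also have "\<dots> = 2 * measure lebesgue C"
    using assms(3,4) by (simp add: measure_lebesgue2_Times fmeasurable_lebesgue_unit)
  finally show ?thesis .
qed

section \<open>The complete bipartite graphon\<close>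

lemma zero_one_graphon_Wlim: "zero_one_graphon Wlim"
  by unfold_locales (auto simp: Wlim_def atLeastAtMost_iff)

lemma is_graphon_Wlim: "is_graphon Wlim"
  using zero_one_graphon.measurable[OF zero_one_graphon_Wlim] by (auto simp: is_graphon_def Wlim_def)

lemma measure_unit_diff_Int:
  fixes A H :: "real set"
  assumes "A \<in> sets lebesgue" "H \<in> sets lebesgue" "H \<subseteq> {0..1}"
  shows "measure lebesgue (({0..1} - A) \<inter> H) = measure lebesgue H - measure lebesgue (A \<inter> H)"
proof -
  have "({0..1} - A) \<inter> H = H - A \<inter> H" using assms(3) by blast
  then show ?thesis
    using assms emeasure_lebesgue_unit_ne_infinity[OF assms(3)] by (simp add: measure_Diff)
qed

lemma measure_unit_halves:
  assumes "A \<in> unit_sets"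
  shows "measure lebesgue A = measure lebesgue (A \<inter> {0..1/2}) + measure lebesgue (A \<inter> {1/2<..1})"
proof -
  have A: "A \<subseteq> {0..1}" "A \<in> sets lebesgue" using assms by (auto simp: unit_sets_def)
  then have "A = A \<inter> {0..1/2} \<union> A \<inter> {1/2<..1}" by auto
  then have "measure lebesgue A = measure lebesgue (A \<inter> {0..1/2} \<union> A \<inter> {1/2<..1})"
    by (rule arg_cong)
  also have "\<dots> = measure lebesgue (A \<inter> {0..1/2}) + measure lebesgue (A \<inter> {1/2<..1})"
    using A by (intro measure_Union emeasure_lebesgue_unit_ne_infinity) auto
  finally show ?thesis .
qed

lemma e_W_Wlim:
  assumes "A \<in> unit_sets" "B \<in> unit_sets"
  shows "e_W Wlim A B = measure lebesgue (A \<inter> {0..1/2}) * measure lebesgue (B \<inter> {1/2<..1})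
    + measure lebesgue (A \<inter> {1/2<..1}) * measure lebesgue (B \<inter> {0..1/2})"
proof -
  interpret zero_one_graphon Wlim by (rule zero_one_graphon_Wlim)
  define L R where "L = {0..1/2::real}" and "R = {1/2<..1::real}"
  have unit: "A \<subseteq> {0..1}" "B \<subseteq> {0..1}" "A \<in> sets lebesgue" "B \<in> sets lebesgue"
    using assms by (auto simp: unit_sets_def)
  then have fin: "A \<inter> L \<in> fmeasurable lebesgue" "A \<inter> R \<in> fmeasurable lebesgue"
    "B \<inter> L \<in> fmeasurable lebesgue" "B \<inter> R \<in> fmeasurable lebesgue"
    by (auto intro!: fmeasurable_lebesgue_unit simp: L_def R_def)
  have "A \<times> B \<inter> edges = (A \<inter> L) \<times> (B \<inter> R) \<union> (A \<inter> R) \<times> (B \<inter> L)"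
    using unit by (auto simp: edges_def Wlim_def L_def R_def)
  then have "e_W Wlim A B = measure lebesgue2 ((A \<inter> L) \<times> (B \<inter> R) \<union> (A \<inter> R) \<times> (B \<inter> L))"
    by (simp add: e_W_eq_measure)
  also have "\<dots> = measure lebesgue2 ((A \<inter> L) \<times> (B \<inter> R)) + measure lebesgue2 ((A \<inter> R) \<times> (B \<inter> L))"
  proof (rule measure_Union)
    show "emeasure lebesgue2 ((A \<inter> L) \<times> (B \<inter> R)) \<noteq> \<infinity>" "emeasure lebesgue2 ((A \<inter> R) \<times> (B \<inter> L)) \<noteq> \<infinity>"
      using unit by (auto intro!: fmeasurableD2 fmeasurable_lebesgue2_unit pair_measureI simp: L_def R_def)
  qed (use fin in \<open>auto simp: L_def R_def\<close>)
  finally show ?thesis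
    using fin by (simp add: measure_lebesgue2_Times L_def R_def)
qed

lemma complete_bipartite_cut_bound:
  fixes a b :: real
  assumes "0 \<le> a" "a \<le> 1/2" "0 \<le> b" "b \<le> 1/2"
  shows "min ((a + b) / 2) ((1 - (a + b)) / 2) \<le> 2 * (a * (1/2 - b) + b * (1/2 - a))"
proof -
  define s where "s = a + b"
  have "(a + b)\<^sup>2 - 4 * a * b = (a - b)\<^sup>2"
    by (simp add: power2_eq_square algebra_simps)
  then have "4 * a * b \<le> s\<^sup>2"
    unfolding s_def by (metis diff_ge_0_iff_ge zero_le_power2)
  then have "s * (1 - s) \<le> 2 * (a * (1/2 - b) + b * (1/2 - a))"
    by (simp add: s_def power2_eq_square algebra_simps)
  moreover have "min (s / 2) ((1 - s) / 2) \<le> s * (1 - s)"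
  proof (cases "s \<le> 1/2")
    case True
    have "s * (1/2) \<le> s * (1 - s)"
      using True assms by (intro mult_left_mono) (auto simp: s_def)
    then show ?thesis by (simp add: min_def)
  next
    case False
    have "(1 - s) * (1/2) \<le> (1 - s) * s"
      using False assms by (intro mult_left_mono) (auto simp: s_def)
    then show ?thesis by (simp add: mult.commute min_def)
  qed
  ultimately show ?thesis by (simp add: s_def)
qed

lemma cut_ratio_Wlim:
  assumes "A \<in> unit_sets"
  defines "a \<equiv> measure lebesgue (A \<inter> {0..1/2})" and "b \<equiv> measure lebesgue (A \<inter> {1/2<..1})"
  shows "cut_ratio Wlim A = (a * (1/2 - b) + b * (1/2 - a)) / min ((a + b) / 2) ((1 - (a + b)) / 2)"
proof -
  have A: "A \<subseteq> {0..1}" "A \<in> sets lebesgue" using assms(1) by (auto simp: unit_sets_def)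
  have B: "{0..1} - A \<in> unit_sets" and unit: "{0..1} \<in> unit_sets"
    using A(2) by (auto simp: unit_sets_def)
  have halves: "{0..1} \<inter> {0..1/2} = {0..1/2::real}" "{0..1} \<inter> {1/2<..1} = {1/2<..1::real}"
    by auto
  have B_halves: "measure lebesgue (({0..1} - A) \<inter> {0..1/2}) = 1/2 - a"
    "measure lebesgue (({0..1} - A) \<inter> {1/2<..1}) = 1/2 - b"
    by (simp_all add: measure_unit_diff_Int A(2) a_def b_def subset_eq)
  have cut: "e_W Wlim A ({0..1} - A) = a * (1/2 - b) + b * (1/2 - a)"
    unfolding e_W_Wlim[OF assms(1) B] B_halves a_def b_def ..
  have vol_A: "vol_W Wlim A = (a + b) / 2"
    unfolding vol_W_def e_W_Wlim[OF assms(1) unit] halves by (simp add: a_def b_def)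
  have vol_B: "vol_W Wlim ({0..1} - A) = (1 - (a + b)) / 2"
    unfolding vol_W_def e_W_Wlim[OF B unit] halves B_halves by (simp add: algebra_simps)
  show ?thesis
    unfolding cut_ratio_def cut vol_A vol_B ..
qed

lemma cheeger_Wlim: "cheeger Wlim = 1/2"
proof -
  have lower: "1/2 \<le> cut_ratio Wlim A" if "A \<in> proper_unit_sets" for A
  proof -
    define a b where "a = measure lebesgue (A \<inter> {0..1/2})" and "b = measure lebesgue (A \<inter> {1/2<..1})"
    have A: "A \<in> unit_sets" "0 < a + b" "a + b < 1"
      using that measure_unit_halves[of A] by (auto simp: proper_unit_sets_def a_def b_def)
    have "a \<le> measure lebesgue {0..1/2::real}" "b \<le> measure lebesgue {1/2<..1::real}"
      using A(1) unfolding a_def b_def unit_sets_def by (intro measure_unit_mono; force)+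
    then have "a \<le> 1/2" "b \<le> 1/2" by simp_all
    moreover have "0 \<le> a" "0 \<le> b" by (simp_all add: a_def b_def)
    moreover have "0 < min ((a + b) / 2) ((1 - (a + b)) / 2)" using A(2,3) by simp
    ultimately show ?thesis
      unfolding cut_ratio_Wlim[OF A(1), folded a_def b_def]
      using complete_bipartite_cut_bound[of a b] by (simp add: le_divide_eq)
  qed
  define A\<^sub>0 where "A\<^sub>0 = {0..1/4} \<union> {3/4..1::real}"
  have A\<^sub>0: "A\<^sub>0 \<in> unit_sets" by (auto simp: unit_sets_def A\<^sub>0_def)
  have "A\<^sub>0 \<inter> {0..1/2} = {0..1/4}" "A\<^sub>0 \<inter> {1/2<..1} = {3/4..1}"
    by (auto simp: A\<^sub>0_def)
  then have "A\<^sub>0 \<in> proper_unit_sets" "cut_ratio Wlim A\<^sub>0 = 1/2"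
    using measure_unit_halves[OF A\<^sub>0] cut_ratio_Wlim[OF A\<^sub>0] A\<^sub>0 by (simp_all add: proper_unit_sets_def)
  then show ?thesis
    unfolding cheeger_eq_INF using lower by (intro cInf_eq_minimum) auto
qed

section \<open>Bipartite graphons with a bridging clique\<close>

definition bridge :: "real \<Rightarrow> real \<Rightarrow> real set" where
  "bridge \<delta> \<epsilon> = {1/2 - \<epsilon> - \<delta> .. 1/2 + \<epsilon> + \<delta>}"

definition bridged_bipartite :: "real \<Rightarrow> real \<Rightarrow> real \<Rightarrow> real \<Rightarrow> real" where
  "bridged_bipartite \<delta> \<epsilon> x y =
     (if (x \<le> 1/2 - \<delta> \<and> 1/2 + \<delta> \<le> y) \<or> (1/2 + \<delta> \<le> x \<and> y \<le> 1/2 - \<delta>)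
       \<or> (x \<in> bridge \<delta> \<epsilon> \<and> y \<in> bridge \<delta> \<epsilon>) then 1 else 0)"

lemma sets_bridge [simp]: "bridge \<delta> \<epsilon> \<in> sets lebesgue"
  by (simp add: bridge_def)

lemma bridged_bipartite_eq_1I:
  "x \<le> 1/2 - \<delta> \<Longrightarrow> 1/2 + \<delta> \<le> y \<Longrightarrow> bridged_bipartite \<delta> \<epsilon> x y = 1"
  "1/2 + \<delta> \<le> x \<Longrightarrow> y \<le> 1/2 - \<delta> \<Longrightarrow> bridged_bipartite \<delta> \<epsilon> x y = 1"
  "x \<in> bridge \<delta> \<epsilon> \<Longrightarrow> y \<in> bridge \<delta> \<epsilon> \<Longrightarrow> bridged_bipartite \<delta> \<epsilon> x y = 1"
  by (simp_all add: bridged_bipartite_def)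

lemma zero_one_graphon_bridged_bipartite: "zero_one_graphon (bridged_bipartite \<delta> \<epsilon>)"
proof
  show "(\<lambda>z. bridged_bipartite \<delta> \<epsilon> (fst z) (snd z)) \<in> borel_measurable lebesgue2"
    unfolding bridged_bipartite_def bridge_def atLeastAtMost_iff by measurable
qed (simp add: bridged_bipartite_def)

lemma bridged_bipartite_sym: "bridged_bipartite \<delta> \<epsilon> x y = bridged_bipartite \<delta> \<epsilon> y x"
  unfolding bridged_bipartite_def by (intro if_cong refl) blast+

lemma is_graphon_bridged_bipartite: "is_graphon (bridged_bipartite \<delta> \<epsilon>)"
  unfolding is_graphon_def
proof (intro conjI ballI)
  show "(\<lambda>z. bridged_bipartite \<delta> \<epsilon> (fst z) (snd z)) \<in> borel_measurable lebesgue2"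
    by (rule zero_one_graphon.measurable[OF zero_one_graphon_bridged_bipartite])
  fix x y
  show "bridged_bipartite \<delta> \<epsilon> x y = bridged_bipartite \<delta> \<epsilon> y x"
    by (rule bridged_bipartite_sym)
  show "0 \<le> bridged_bipartite \<delta> \<epsilon> x y" "bridged_bipartite \<delta> \<epsilon> x y \<le> 1"
    by (simp_all add: bridged_bipartite_def)
qed

context
  fixes \<delta> \<epsilon> :: real
  assumes \<delta>: "0 < \<delta>" and \<epsilon>: "0 < \<epsilon>" and small: "\<delta> + \<epsilon> < 1/2"
begin

interpretation zero_one_graphon "bridged_bipartite \<delta> \<epsilon>"
  by (rule zero_one_graphon_bridged_bipartite)

lemma bridge_subset_unit: "bridge \<delta> \<epsilon> \<subseteq> {0..1}"
  using small \<delta> \<epsilon> by (auto simp: bridge_def)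

lemma measure_bridge: "measure lebesgue (bridge \<delta> \<epsilon>) = 2 * (\<delta> + \<epsilon>)"
  using \<delta> \<epsilon> by (simp add: bridge_def)

lemma graphon_connected_bridged_bipartite: "graphon_connected (bridged_bipartite \<delta> \<epsilon>)"
proof (rule graphon_connected_if_bridged)
  have "{0..1/2 - \<delta>} \<inter> bridge \<delta> \<epsilon> = {1/2 - \<epsilon> - \<delta>..1/2 - \<delta>}"
    "{1/2 + \<delta>..1} \<inter> bridge \<delta> \<epsilon> = {1/2 + \<delta>..1/2 + \<epsilon> + \<delta>}"
    using \<delta> \<epsilon> small by (auto simp: bridge_def)
  then show "0 < measure lebesgue ({0..1/2 - \<delta>} \<inter> bridge \<delta> \<epsilon>)"
    "0 < measure lebesgue ({1/2 + \<delta>..1} \<inter> bridge \<delta> \<epsilon>)"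
    using \<epsilon> by simp_all
qed (use \<delta> \<epsilon> bridge_subset_unit in \<open>auto intro: bridged_bipartite_eq_1I simp: bridge_def\<close>)

lemma bridge_proper: "bridge \<delta> \<epsilon> \<in> proper_unit_sets"
  using bridge_subset_unit measure_bridge \<delta> \<epsilon> small by (simp add: proper_unit_sets_def unit_sets_def)

text \<open>Only the two slices of the bridge inside the blocks, each of width \<open>\<epsilon>\<close>, have neighbours
  outside the bridge.\<close>
lemma e_W_bridge_complement_le:
  "e_W (bridged_bipartite \<delta> \<epsilon>) (bridge \<delta> \<epsilon>) ({0..1} - bridge \<delta> \<epsilon>) \<le> 2 * \<epsilon>"
proof -
  let ?C = "bridge \<delta> \<epsilon>"
  let ?U = "{1/2 - \<epsilon> - \<delta>..1/2 - \<delta>} \<times> {0..1} \<union> {1/2 + \<delta>..1/2 + \<epsilon> + \<delta>} \<times> {0..1}"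
  have "e_W (bridged_bipartite \<delta> \<epsilon>) ?C ({0..1} - ?C) \<le> measure lebesgue2 ?U"
  proof (rule e_W_le_measure)
    show "?C \<times> ({0..1} - ?C) \<inter> edges \<subseteq> ?U"
    proof
      fix z assume "z \<in> ?C \<times> ({0..1} - ?C) \<inter> edges"
      then obtain x y where xy: "z = (x, y)" "x \<in> ?C" "y \<in> {0..1} - ?C" "bridged_bipartite \<delta> \<epsilon> x y = 1"
        by (auto simp: edges_def)
      then have "x \<le> 1/2 - \<delta> \<or> 1/2 + \<delta> \<le> x"
        by (auto simp: bridged_bipartite_def split: if_splits)
      then show "z \<in> ?U" using xy by (auto simp: bridge_def)
    qed
    show "?U \<in> fmeasurable lebesgue2"
      using \<delta> \<epsilon> small by (intro fmeasurable_lebesgue2_unit) auto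
  qed auto
  also have "\<dots> \<le> measure lebesgue2 ({1/2 - \<epsilon> - \<delta>..1/2 - \<delta>} \<times> {0..1})
      + measure lebesgue2 ({1/2 + \<delta>..1/2 + \<epsilon> + \<delta>} \<times> {0..1})"
    by (intro measure_Un_le) auto
  also have "\<dots> = 2 * \<epsilon>"
    using \<epsilon> by (simp add: measure_lebesgue2_Times)
  finally show ?thesis .
qed

lemma vol_W_bridge_ge: "(2 * (\<delta> + \<epsilon>))\<^sup>2 \<le> vol_W (bridged_bipartite \<delta> \<epsilon>) (bridge \<delta> \<epsilon>)"
proof -
  have "measure lebesgue (bridge \<delta> \<epsilon>) * measure lebesgue (bridge \<delta> \<epsilon>)
      \<le> vol_W (bridged_bipartite \<delta> \<epsilon>) (bridge \<delta> \<epsilon>)"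
    unfolding vol_W_def using bridge_subset_unit
    by (intro e_W_ge_Times) (auto intro: bridged_bipartite_eq_1I simp: unit_sets_def)
  then show ?thesis by (simp add: measure_bridge power2_eq_square)
qed

lemma vol_W_bridge_complement_ge:
  "(1/2 - \<delta> - \<epsilon>)\<^sup>2 \<le> vol_W (bridged_bipartite \<delta> \<epsilon>) ({0..1} - bridge \<delta> \<epsilon>)"
proof -
  have "measure lebesgue {0..<1/2 - \<delta> - \<epsilon>} * measure lebesgue {1/2 + \<delta> + \<epsilon><..1}
      \<le> vol_W (bridged_bipartite \<delta> \<epsilon>) ({0..1} - bridge \<delta> \<epsilon>)"
    unfolding vol_W_def using \<delta> \<epsilon>
    by (intro e_W_ge_Times) (auto intro: bridged_bipartite_eq_1I simp: unit_sets_def bridge_def)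
  moreover have "measure lebesgue {0..<1/2 - \<delta> - \<epsilon>} = 1/2 - \<delta> - \<epsilon>"
    "measure lebesgue {1/2 + \<delta> + \<epsilon><..1} = 1/2 - \<delta> - \<epsilon>"
    using small by simp_all
  ultimately show ?thesis by (simp only: power2_eq_square)
qed

lemma cheeger_bridged_bipartite_le:
  "cheeger (bridged_bipartite \<delta> \<epsilon>) \<le> 2 * \<epsilon> / ((2 * (\<delta> + \<epsilon>))\<^sup>2 * (1/2 - \<delta> - \<epsilon>)\<^sup>2)"
proof -
  define a b where "a = (2 * (\<delta> + \<epsilon>))\<^sup>2" and "b = (1/2 - \<delta> - \<epsilon>)\<^sup>2"
  have "0 < a" "a \<le> 1" "0 < b" "b \<le> 1"
    using \<delta> \<epsilon> small by (auto simp: a_def b_def abs_le_iff intro!: power_le_one)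
  then have ab: "0 < a * b" "a * b \<le> a" "a * b \<le> b"
    by (simp_all add: mult_le_cancel_left1 mult_le_cancel_right1)
  have "cheeger (bridged_bipartite \<delta> \<epsilon>) \<le> cut_ratio (bridged_bipartite \<delta> \<epsilon>) (bridge \<delta> \<epsilon>)"
    by (rule cheeger_le_cut_ratio[OF is_graphon_bridged_bipartite bridge_proper])
  also have "\<dots> \<le> 2 * \<epsilon> / (a * b)"
    unfolding cut_ratio_def using e_W_bridge_complement_le vol_W_bridge_ge vol_W_bridge_complement_ge ab \<epsilon>
    by (intro frac_le) (auto simp: a_def b_def)
  finally show ?thesis by (simp add: a_def b_def)
qed

lemma L1_dist_bridged_bipartite_le: "L1_dist (bridged_bipartite \<delta> \<epsilon>) Wlim \<le> 4 * (\<delta> + \<epsilon>)"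
proof -
  have "L1_dist (bridged_bipartite \<delta> \<epsilon>) Wlim \<le> 2 * measure lebesgue (bridge \<delta> \<epsilon>)"
    using \<delta> \<epsilon> bridge_subset_unit
    by (intro L1_dist_le_if_agree_outside zero_one_graphon_bridged_bipartite zero_one_graphon_Wlim)
       (auto simp: bridged_bipartite_def Wlim_def bridge_def)
  then show ?thesis by (simp add: measure_bridge)
qed

end

lemma Wn_eq_bridged_bipartite: "Wn n = bridged_bipartite (1 / real n) (exp (- real n))"
  unfolding Wn_def bridged_bipartite_def bridge_def by (intro ext) (rule refl)

lemma Wn_parameters:
  assumes "3 \<le> n"
  shows "0 < 1 / real n" "0 < exp (- real n)" "1 / real n + exp (- real n) < 1/2"
proof -
  have "17/2 \<le> exp (3::real)"
    using exp_lower_Taylor_quadratic[of 3] by simp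
  also have "\<dots> \<le> exp (real n)" using assms by simp
  finally have "exp (- real n) \<le> 2/17" by (simp add: exp_minus field_simps)
  moreover have "1 / real n \<le> 1/3" using assms by (simp add: field_simps)
  ultimately show "1 / real n + exp (- real n) < 1/2" by linarith
  show "0 < 1 / real n" "0 < exp (- real n)" using assms by simp_all
qed

theorem mainTheorem20:
  shows "(\<forall>n\<ge>3. is_graphon (Wn n) \<and> graphon_connected (Wn n)) \<and> is_graphon Wlim
    \<and> (\<lambda>n. L1_dist (Wn n) Wlim) \<longlonglongrightarrow> 0
    \<and> (\<lambda>n. cheeger (Wn n)) \<longlonglongrightarrow> 0
    \<and> cheeger Wlim = 1/2
    \<and> \<not> ((\<lambda>n. cheeger (Wn n)) \<longlonglongrightarrow> cheeger Wlim)"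
proof -
  have large: "\<forall>\<^sub>F n in sequentially. 3 \<le> n" by (rule eventually_ge_at_top)
  have L1: "(\<lambda>n. L1_dist (Wn n) Wlim) \<longlonglongrightarrow> 0"
  proof (rule tendsto_sandwich[OF _ _ tendsto_const])
    show "\<forall>\<^sub>F n in sequentially. L1_dist (Wn n) Wlim \<le> 4 * (1 / real n + exp (- real n))"
      using large by eventually_elim
        (unfold Wn_eq_bridged_bipartite, rule L1_dist_bridged_bipartite_le[OF Wn_parameters])
    show "(\<lambda>n. 4 * (1 / real n + exp (- real n))) \<longlonglongrightarrow> 0" by real_asymp
  qed (simp add: L1_dist_nonneg)
  have cheeger_Wn: "(\<lambda>n. cheeger (Wn n)) \<longlonglongrightarrow> 0"
  proof (rule tendsto_sandwich[OF _ _ tendsto_const])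
    show "\<forall>\<^sub>F n in sequentially. cheeger (Wn n) \<le> 2 * exp (- real n)
        / ((2 * (1 / real n + exp (- real n)))\<^sup>2 * (1/2 - 1 / real n - exp (- real n))\<^sup>2)"
      using large by eventually_elim
        (unfold Wn_eq_bridged_bipartite, rule cheeger_bridged_bipartite_le[OF Wn_parameters])
    show "(\<lambda>n. 2 * exp (- real n)
        / ((2 * (1 / real n + exp (- real n)))\<^sup>2 * (1/2 - 1 / real n - exp (- real n))\<^sup>2)) \<longlonglongrightarrow> 0"
      by real_asymp
  qed (simp add: cheeger_nonneg is_graphon_bridged_bipartite Wn_eq_bridged_bipartite)
  have "\<not> (\<lambda>n. cheeger (Wn n)) \<longlonglongrightarrow> cheeger Wlim"
    using cheeger_Wn cheeger_Wlim LIMSEQ_unique by fastforce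
  moreover have "is_graphon (Wn n) \<and> graphon_connected (Wn n)" if "3 \<le> n" for n
    unfolding Wn_eq_bridged_bipartite
    using is_graphon_bridged_bipartite graphon_connected_bridged_bipartite[OF Wn_parameters[OF that]] by blast
  ultimately show ?thesis
    using L1 cheeger_Wn cheeger_Wlim is_graphon_Wlim by blast
qed

end
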